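(* Let $m,n\in\mathbb{N}$, let $p_{\ell}\in\mathbb{N}$ for $1\le\ell\le m$, and let $s_{j,\ell}\in\mathbb{C}$ with $0<\Re(s_{j,\ell})<\frac12$ for $1\le j\le n$, $1\le\ell\le m$. Then the $n\times n$ matrix \[ \left(\prod_{\ell=1}^{m}\frac{(s_{j,\ell}+\overline{s_{k,\ell}})_{p_{\ell}}\,\zeta(p_{\ell}+s_{j,\ell}+\overline{s_{k,\ell}})}{\sin\pi(s_{j,\ell}+\overline{s_{k,\ell}})}\right)_{j,k=1}^{n} \] is positive semidefinite.
   Context: $(s)_p=s(s+1)\cdots(s+p-1)=\Gamma(s+p)/\Gamma(s)$, and $\zeta$ is the Riemann zeta function. A complex matrix $A=(a_{j,k})$ is positive semidefinite if $\sum_{j,k}a_{j,k}z_j\overline{z_k}\ge0$ for all complex $z_j$. *)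

theory Defs
  imports "HOL-Analysis.Analysis"
begin

text \<open>Riemann zeta function via its Dirichlet series; this is the Riemann zeta
  function on the half-plane Re s > 1, which is the only region where it is
  evaluated in the main statement (there Re of the argument exceeds p \<ge> 1).\<close>
definition riemann_zeta :: "complex \<Rightarrow> complex" where
  "riemann_zeta s = (\<Sum>k. 1 / (of_nat (Suc k)) powr s)"

definition psd_matrix :: "nat \<Rightarrow> (nat \<Rightarrow> nat \<Rightarrow> complex) \<Rightarrow> bool" where
  "psd_matrix n a \<longleftrightarrow>
     (\<forall>z :: nat \<Rightarrow> complex.
        let q = (\<Sum>j\<in>{1..n}. \<Sum>k\<in>{1..n}. a j k * z j * cnj (z k))
        in Im q = 0 \<and> Re q \<ge> 0)"

end

theory Submission
  imports Defs
begin

text \<open>With \<open>a = s(j) + conj s(k)\<close>, the reflection formula and \<open>(a)\<^sub>p = \<Gamma>(a+p)/\<Gamma>(a)\<close> turn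
  each factor into \<open>\<Gamma>(1 - a) \<Gamma>(p + a) \<zeta>(p + a) / \<pi>\<close>. Each of these three kernels has the
  form \<open>K(b(j) + conj b(k))\<close>, where \<open>K(b)\<close> is Euler's integral or the Dirichlet series of
  powers \<open>t^b\<close>; splitting \<open>t^(b(j) + conj b(k)) = t^b(j) * conj (t^b(k))\<close> exhibits it as a
  Gram kernel \<open>\<integral> g(j) conj g(k)\<close>. Entrywise multiplication by a Gram kernel preserves positive
  semidefiniteness (Schur), so applying the product of all kernels to the all-ones
  matrix gives the claim.\<close>

definition quad_form :: "nat \<Rightarrow> (nat \<Rightarrow> nat \<Rightarrow> complex) \<Rightarrow> (nat \<Rightarrow> complex) \<Rightarrow> complex" where
  "quad_form n a z = (\<Sum>j\<in>{1..n}. \<Sum>k\<in>{1..n}. a j k * z j * cnj (z k))"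

lemma psd_matrix_iff_quad_form:
  "psd_matrix n a \<longleftrightarrow> (\<forall>z. Im (quad_form n a z) = 0 \<and> Re (quad_form n a z) \<ge> 0)"
  by (simp add: psd_matrix_def quad_form_def Let_def)

lemma psd_matrix_cong:
  assumes "\<And>j k. j \<in> {1..n} \<Longrightarrow> k \<in> {1..n} \<Longrightarrow> a j k = b j k"
  shows "psd_matrix n a \<longleftrightarrow> psd_matrix n b"
proof -
  have "quad_form n a z = quad_form n b z" for z
    unfolding quad_form_def by (intro sum.cong refl) (simp add: assms)
  then show ?thesis
    unfolding psd_matrix_iff_quad_form by simp
qed

lemma psd_matrix_ones: "psd_matrix n (\<lambda>j k. 1)"
proof -
  have "quad_form n (\<lambda>j k. 1) z = (\<Sum>j\<in>{1..n}. z j) * cnj (\<Sum>j\<in>{1..n}. z j)" for z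
    unfolding quad_form_def
    by (simp add: sum_distrib_left sum_distrib_right cnj_sum) (rule sum.swap)
  then show ?thesis
    unfolding psd_matrix_iff_quad_form complex_mult_cnj by simp
qed

definition schur_multiplier :: "nat \<Rightarrow> (nat \<Rightarrow> nat \<Rightarrow> complex) \<Rightarrow> bool" where
  "schur_multiplier n f \<longleftrightarrow> (\<forall>a. psd_matrix n a \<longrightarrow> psd_matrix n (\<lambda>j k. a j k * f j k))"

lemma psd_matrix_if_schur_multiplier: "schur_multiplier n f \<Longrightarrow> psd_matrix n f"
  using psd_matrix_ones[of n] unfolding schur_multiplier_def by fastforce

lemma schur_multiplier_cong:
  assumes "\<And>j k. j \<in> {1..n} \<Longrightarrow> k \<in> {1..n} \<Longrightarrow> f j k = g j k"
  shows "schur_multiplier n f \<longleftrightarrow> schur_multiplier n g"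
proof -
  have "psd_matrix n (\<lambda>j k. a j k * f j k) \<longleftrightarrow> psd_matrix n (\<lambda>j k. a j k * g j k)" for a
    using assms by (intro psd_matrix_cong) simp
  then show ?thesis
    unfolding schur_multiplier_def by simp
qed

lemma schur_multiplier_mult:
  "schur_multiplier n f \<Longrightarrow> schur_multiplier n g \<Longrightarrow> schur_multiplier n (\<lambda>j k. f j k * g j k)"
  unfolding schur_multiplier_def by (metis (no_types, lifting) ext mult.assoc)

lemma schur_multiplier_prod:
  "finite L \<Longrightarrow> (\<And>l. l \<in> L \<Longrightarrow> schur_multiplier n (f l)) \<Longrightarrow>
     schur_multiplier n (\<lambda>j k. \<Prod>l\<in>L. f l j k)"
proof (induction L rule: finite_induct)
  case empty
  then show ?case by (simp add: schur_multiplier_def)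
next
  case (insert l L)
  then show ?case
    using schur_multiplier_mult[of n "f l" "\<lambda>j k. \<Prod>l\<in>L. f l j k"] by simp
qed

lemma schur_multiplier_of_real_nonneg:
  assumes "c \<ge> 0"
  shows "schur_multiplier n (\<lambda>j k. of_real c)"
  unfolding schur_multiplier_def psd_matrix_iff_quad_form
proof (intro allI impI conjI)
  fix a z assume a: "\<forall>z. Im (quad_form n a z) = 0 \<and> 0 \<le> Re (quad_form n a z)"
  have "quad_form n (\<lambda>j k. a j k * of_real c) z = of_real c * quad_form n a z"
    unfolding quad_form_def by (simp add: sum_distrib_left algebra_simps)
  then show "Im (quad_form n (\<lambda>j k. a j k * of_real c) z) = 0"
    and "0 \<le> Re (quad_form n (\<lambda>j k. a j k * of_real c) z)"
    using a assms by simp_all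
qed

lemma quad_form_mult_rank_one:
  "(\<Sum>j\<in>{1..n}. \<Sum>k\<in>{1..n}. a j k * z j * cnj (z k) * (c * (g j * cnj (g k))))
     = c * quad_form n a (\<lambda>j. z j * g j)"
  unfolding quad_form_def by (simp add: sum_distrib_left algebra_simps)

lemma schur_multiplier_gram_integral:
  fixes w :: "real \<Rightarrow> real" and g :: "real \<Rightarrow> nat \<Rightarrow> complex"
  assumes f: "\<And>j k. j \<in> {1..n} \<Longrightarrow> k \<in> {1..n} \<Longrightarrow>
      ((\<lambda>t. of_real (w t) * (g t j * cnj (g t k))) has_integral f j k) S"
    and w: "\<And>t. t \<in> S \<Longrightarrow> w t \<ge> 0"
  shows "schur_multiplier n f"
  unfolding schur_multiplier_def psd_matrix_iff_quad_form
proof (intro allI impI conjI)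
  fix a z assume a: "\<forall>z. Im (quad_form n a z) = 0 \<and> 0 \<le> Re (quad_form n a z)"
  let ?q = "\<lambda>t. of_real (w t) * quad_form n a (\<lambda>j. z j * g t j)"
  have "((\<lambda>t. \<Sum>j\<in>{1..n}. \<Sum>k\<in>{1..n}. a j k * z j * cnj (z k) * (of_real (w t) * (g t j * cnj (g t k))))
      has_integral (\<Sum>j\<in>{1..n}. \<Sum>k\<in>{1..n}. a j k * z j * cnj (z k) * f j k)) S"
    by (intro has_integral_sum has_integral_mult_right f finite_atLeastAtMost) auto
  then have q: "(?q has_integral quad_form n (\<lambda>j k. a j k * f j k) z) S"
    unfolding quad_form_mult_rank_one by (simp add: quad_form_def algebra_simps)
  have "((\<lambda>t. Re (?q t)) has_integral Re (quad_form n (\<lambda>j k. a j k * f j k) z)) S"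
    using has_integral_linear[OF q bounded_linear_Re] by (simp add: o_def)
  then show "0 \<le> Re (quad_form n (\<lambda>j k. a j k * f j k) z)"
    by (rule has_integral_nonneg) (use a w in auto)
  have "((\<lambda>t. Im (?q t)) has_integral Im (quad_form n (\<lambda>j k. a j k * f j k) z)) S"
    using has_integral_linear[OF q bounded_linear_Im] by (simp add: o_def)
  then have "((\<lambda>t. 0) has_integral Im (quad_form n (\<lambda>j k. a j k * f j k) z)) S"
    by (rule has_integral_eq[rotated]) (use a in auto)
  then show "Im (quad_form n (\<lambda>j k. a j k * f j k) z) = 0"
    using has_integral_unique has_integral_0 by blast
qed

lemma schur_multiplier_gram_sums:
  fixes g :: "nat \<Rightarrow> nat \<Rightarrow> complex"
  assumes f: "\<And>j k. j \<in> {1..n} \<Longrightarrow> k \<in> {1..n} \<Longrightarrow> (\<lambda>i. g i j * cnj (g i k)) sums f j k"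
  shows "schur_multiplier n f"
  unfolding schur_multiplier_def psd_matrix_iff_quad_form
proof (intro allI impI conjI)
  fix a z assume a: "\<forall>z. Im (quad_form n a z) = 0 \<and> 0 \<le> Re (quad_form n a z)"
  let ?q = "\<lambda>i. quad_form n a (\<lambda>j. z j * g i j)"
  have "(\<lambda>i. \<Sum>j\<in>{1..n}. \<Sum>k\<in>{1..n}. a j k * z j * cnj (z k) * (1 * (g i j * cnj (g i k))))
      sums (\<Sum>j\<in>{1..n}. \<Sum>k\<in>{1..n}. a j k * z j * cnj (z k) * f j k)"
    by (intro sums_sum sums_mult) (simp add: f)
  then have "?q sums quad_form n (\<lambda>j k. a j k * f j k) z"
    unfolding quad_form_mult_rank_one by (simp add: quad_form_def algebra_simps)
  then have re: "(\<lambda>i. Re (?q i)) sums Re (quad_form n (\<lambda>j k. a j k * f j k) z)"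
    and im: "(\<lambda>i. Im (?q i)) sums Im (quad_form n (\<lambda>j k. a j k * f j k) z)"
    by (auto simp: sums_complex_iff)
  show "0 \<le> Re (quad_form n (\<lambda>j k. a j k * f j k) z)"
    using sums_unique[OF re] suminf_nonneg[OF sums_summable[OF re]] a by auto
  show "Im (quad_form n (\<lambda>j k. a j k * f j k) z) = 0"
    using im a sums_unique sums_zero by fastforce
qed

lemma schur_multiplier_Gamma:
  assumes b: "\<And>j. j \<in> {1..n} \<Longrightarrow> Re (b j) > 0"
  shows "schur_multiplier n (\<lambda>j k. Gamma (b j + cnj (b k)))"
proof (rule schur_multiplier_gram_integral[where S="{0<..}" and w="\<lambda>t. 1 / exp t"
      and g="\<lambda>t j. of_real t powr (b j - 1/2)"])
  fix j k assume "j \<in> {1..n}" "k \<in> {1..n}"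
  then have "Re (b j + cnj (b k)) > 0"
    using b by (simp add: add_pos_pos)
  from Gamma_integral_complex'[OF this]
  show "((\<lambda>t. of_real (1 / exp t) * (of_real t powr (b j - 1/2) * cnj (of_real t powr (b k - 1/2))))
      has_integral Gamma (b j + cnj (b k))) {0<..}"
  proof (rule has_integral_eq[rotated])
    fix t :: real assume "t \<in> {0<..}"
    then have "cnj (of_real t powr (b k - 1/2)) = of_real t powr (cnj (b k) - 1/2)"
      by (subst cnj_powr) auto
    moreover have "of_real t powr (b j + cnj (b k) - 1)
        = of_real t powr (b j - 1/2) * of_real t powr (cnj (b k) - 1/2)"
      by (simp add: powr_add[symmetric])
    ultimately show "of_real t powr (b j + cnj (b k) - 1) / of_real (exp t)
        = of_real (1 / exp t) * (of_real t powr (b j - 1/2) * cnj (of_real t powr (b k - 1/2)))"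
      by (simp add: field_simps)
  qed
qed auto

lemma summable_riemann_zeta_terms:
  assumes "Re z > 1"
  shows "summable (\<lambda>i. 1 / (of_nat (Suc i) :: complex) powr z)"
proof (rule summable_norm_cancel)
  have "summable (\<lambda>i. real i powr (- Re z))"
    using assms by (subst summable_real_powr_iff) simp
  then have "summable (\<lambda>i. real (Suc i) powr (- Re z))"
    by (subst summable_Suc_iff)
  moreover have "norm (1 / (of_nat (Suc i) :: complex) powr z) = real (Suc i) powr (- Re z)" for i
    by (simp add: norm_divide norm_powr_real_powr powr_minus_divide)
  ultimately show "summable (\<lambda>i. norm (1 / (of_nat (Suc i) :: complex) powr z))"
    by simp
qed

lemma schur_multiplier_riemann_zeta:
  assumes b: "\<And>j. j \<in> {1..n} \<Longrightarrow> Re (b j) > 1/2"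
  shows "schur_multiplier n (\<lambda>j k. riemann_zeta (b j + cnj (b k)))"
proof (rule schur_multiplier_gram_sums[where g="\<lambda>i j. (of_nat (Suc i) :: complex) powr (- b j)"])
  fix j k assume "j \<in> {1..n}" "k \<in> {1..n}"
  then have "Re (b j + cnj (b k)) > 1"
    using b[of j] b[of k] by simp
  then have "(\<lambda>i. 1 / (of_nat (Suc i) :: complex) powr (b j + cnj (b k))) sums riemann_zeta (b j + cnj (b k))"
    unfolding riemann_zeta_def by (intro summable_sums summable_riemann_zeta_terms)
  moreover have "1 / (of_nat (Suc i) :: complex) powr (b j + cnj (b k))
      = of_nat (Suc i) powr (- b j) * cnj (of_nat (Suc i) powr (- b k))" for i
  proof -
    have "cnj ((of_nat (Suc i) :: complex) powr (- b k)) = of_nat (Suc i) powr (- cnj (b k))"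
      by (subst cnj_powr) auto
    moreover have "1 / (of_nat (Suc i) :: complex) powr (b j + cnj (b k))
        = of_nat (Suc i) powr (- b j) * of_nat (Suc i) powr (- cnj (b k))"
      by (simp add: powr_minus_divide[symmetric] powr_add[symmetric])
    ultimately show ?thesis by simp
  qed
  ultimately show "(\<lambda>i. (of_nat (Suc i) :: complex) powr (- b j) * cnj (of_nat (Suc i) powr (- b k)))
      sums riemann_zeta (b j + cnj (b k))"
    by simp
qed

lemma pochhammer_zeta_over_sin_eq:
  assumes "0 < Re a" "Re a < 1"
  shows "pochhammer a p * riemann_zeta (of_nat p + a) / sin (of_real pi * a)
     = of_real (1/pi) * (Gamma (1 - a) * (Gamma (of_nat p + a) * riemann_zeta (of_nat p + a)))"
proof -
  have "a \<notin> \<int>\<^sub>\<le>\<^sub>0"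
    using assms by (auto elim!: nonpos_Ints_cases)
  then have Gamma_a: "Gamma a \<noteq> 0" and poch: "pochhammer a p = Gamma (of_nat p + a) / Gamma a"
    by (simp_all add: Gamma_nonzero pochhammer_Gamma add.commute)
  have refl: "1 / sin (of_real pi * a) = Gamma a * Gamma (1 - a) / of_real pi"
    using Gamma_reflection_complex[of a] by (simp add: field_simps)
  have "pochhammer a p * riemann_zeta (of_nat p + a) / sin (of_real pi * a)
      = pochhammer a p * riemann_zeta (of_nat p + a) * (1 / sin (of_real pi * a))"
    by simp
  also have "\<dots> = Gamma (of_nat p + a) / Gamma a * riemann_zeta (of_nat p + a)
      * (Gamma a * Gamma (1 - a) / of_real pi)"
    unfolding refl poch ..
  also have "\<dots> = of_real (1/pi) * (Gamma (1 - a) * (Gamma (of_nat p + a) * riemann_zeta (of_nat p + a)))"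
    using Gamma_a by (simp add: field_simps)
  finally show ?thesis .
qed

lemma schur_multiplier_pochhammer_zeta_over_sin:
  assumes x: "\<And>j. j \<in> {1..n} \<Longrightarrow> 0 < Re (x j) \<and> Re (x j) < 1/2" and p: "p \<ge> 1"
  shows "schur_multiplier n (\<lambda>j k. pochhammer (x j + cnj (x k)) p
      * riemann_zeta (of_nat p + x j + cnj (x k)) / sin (of_real pi * (x j + cnj (x k))))"
proof -
  define b where "b j = x j + of_nat p / 2" for j
  have reflected: "(1/2 - x j) + cnj (1/2 - x k) = 1 - (x j + cnj (x k))" for j k
    by simp
  have shifted: "b j + cnj (b k) = of_nat p + (x j + cnj (x k))" for j k
    by (simp add: b_def)
  have "schur_multiplier n (\<lambda>j k. of_real (1/pi) * (Gamma ((1/2 - x j) + cnj (1/2 - x k))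
      * (Gamma (b j + cnj (b k)) * riemann_zeta (b j + cnj (b k)))))"
    using x p by (intro schur_multiplier_mult schur_multiplier_of_real_nonneg schur_multiplier_Gamma
        schur_multiplier_riemann_zeta) (force simp: b_def)+
  moreover have "0 < Re (x j + cnj (x k)) \<and> Re (x j + cnj (x k)) < 1"
    if "j \<in> {1..n}" "k \<in> {1..n}" for j k
    using x[OF that(1)] x[OF that(2)] by simp
  ultimately show ?thesis
    unfolding reflected shifted
    by (subst schur_multiplier_cong) (auto simp: pochhammer_zeta_over_sin_eq add.assoc)
qed

theorem mainTheorem10:
  fixes m n :: nat and p :: "nat \<Rightarrow> nat" and s :: "nat \<Rightarrow> nat \<Rightarrow> complex"
  assumes p_pos: "\<And>l. l \<in> {1..m} \<Longrightarrow> p l \<ge> 1"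
    and s_re: "\<And>j l. j \<in> {1..n} \<Longrightarrow> l \<in> {1..m} \<Longrightarrow> 0 < Re (s j l) \<and> Re (s j l) < 1/2"
  shows "psd_matrix n (\<lambda>j k. \<Prod>l\<in>{1..m}.
            pochhammer (s j l + cnj (s k l)) (p l)
            * riemann_zeta (of_nat (p l) + s j l + cnj (s k l))
            / sin (complex_of_real pi * (s j l + cnj (s k l))))"
  using assms
  by (intro psd_matrix_if_schur_multiplier schur_multiplier_prod
      schur_multiplier_pochhammer_zeta_over_sin) auto

end
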